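(* Let $n\geq 6$ be even, let $k=\frac{n-2}{2}$, and let $u$ be the vertex of the friendship graph $F_k$ that is adjacent to every other vertex. Let $F_k^{u}$ be the graph obtained from $F_k$ by adding a new vertex joined by a pendant edge to $u$. Then $\rho(F^{u}_{\frac{n-2}{2}})<\sqrt{2n-4}$.
   Context: All graphs are simple and undirected. The friendship graph $F_k$ is the graph consisting of $k$ edge-disjoint triangles that all share a single common vertex. For a graph $G$ and a vertex $a$, $G^{a}$ denotes the graph obtained from $G$ by adding a new vertex and a pendant edge joining it to $a$. $\rho(G)$ denotes the spectral radius (largest adjacency eigenvalue) of $G$. *)

theory Defs
  imports Complex_Main "Jordan_Normal_Form.Char_Poly"
begin

text \<open>A finite simple graph on vertex set {0..<N} is given by a symmetric,
irreflexive edge predicate E. Its adjacency matrix is the real N x N 0/1 matrix.\<close>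

definition adj_matrix :: "nat \<Rightarrow> (nat \<Rightarrow> nat \<Rightarrow> bool) \<Rightarrow> real mat" where
  "adj_matrix N E = mat N N (\<lambda>(i,j). if E i j then 1 else 0)"

text \<open>Spectral radius = largest adjacency eigenvalue (adjacency matrices are real
symmetric, so all eigenvalues are real).\<close>
definition graph_rho :: "nat \<Rightarrow> (nat \<Rightarrow> nat \<Rightarrow> bool) \<Rightarrow> real" where
  "graph_rho N E = Max {x. eigenvalue (adj_matrix N E) x}"

text \<open>Friendship graph F_k on vertices {0..<2k+1}: centre 0 adjacent to all
others, and triangles {0, 2i-1, 2i} for i = 1..k.\<close>
definition friendship_edges :: "nat \<Rightarrow> nat \<Rightarrow> nat \<Rightarrow> bool" where
  "friendship_edges k i j \<longleftrightarrow> i < 2*k+1 \<and> j < 2*k+1 \<and> i \<noteq> j \<and>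
     (i = 0 \<or> j = 0 \<or> (i + 1) div 2 = (j + 1) div 2)"

definition add_pendant :: "nat \<Rightarrow> (nat \<Rightarrow> nat \<Rightarrow> bool) \<Rightarrow> nat \<Rightarrow> nat \<Rightarrow> nat \<Rightarrow> bool" where
  "add_pendant N E a i j \<longleftrightarrow> E i j \<or> (i = N \<and> j = a) \<or> (i = a \<and> j = N)"

end

(* Let v be an eigenvector of F_k^u for an eigenvalue x > 1. The eigen-equations at the
   pendant vertex and at the two vertices of each triangle express every entry of v through
   the centre entry v_0, which cannot vanish since v_0 = 0 together with x^2 <> 1 forces
   v = 0; substituting into the equation at the centre gives x^3 - x^2 - (2k+1)x + 1 = 0.
   This cubic is positive for x >= 2 sqrt k = sqrt (2n - 4) once k >= 2. The eigenvalues
   form a finite set, nonempty because two vertices of a triangle are adjacent twins,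
   so their maximum lies below sqrt (2n - 4). *)
theory Submission
  imports Defs
begin

lemma adj_matrix_mult_vec_nth:
  assumes "v \<in> carrier_vec N" and "i < N"
  shows "(adj_matrix N E *\<^sub>v v) $ i = (\<Sum>j | j < N \<and> E i j. v $ j)"
proof -
  have "(adj_matrix N E *\<^sub>v v) $ i = (\<Sum>j\<in>{0..<N}. if E i j then v $ j else 0)"
    using assms by (auto simp: adj_matrix_def scalar_prod_def intro: sum.cong)
  also have "\<dots> = (\<Sum>j | j < N \<and> E i j. v $ j)"
    by (simp add: sum.inter_filter[symmetric] atLeast0LessThan lessThan_def)
  finally show ?thesis .
qed

lemma eigenvector_adj_matrix_nth:
  assumes "eigenvector (adj_matrix N E) v x" and "i < N"
  shows "x * v $ i = (\<Sum>j | j < N \<and> E i j. v $ j)"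
proof -
  have v: "v \<in> carrier_vec N" and "adj_matrix N E *\<^sub>v v = x \<cdot>\<^sub>v v"
    using assms(1) by (auto simp: eigenvector_def adj_matrix_def)
  then have "(x \<cdot>\<^sub>v v) $ i = (\<Sum>j | j < N \<and> E i j. v $ j)"
    using assms(2) adj_matrix_mult_vec_nth by metis
  then show ?thesis
    using v assms(2) by simp
qed

lemma finite_eigenvalues_adj_matrix: "finite {x :: real. eigenvalue (adj_matrix N E) x}"
proof -
  have A: "adj_matrix N E \<in> carrier_mat N N" by (simp add: adj_matrix_def)
  then have "char_poly (adj_matrix N E) \<noteq> 0"
    using degree_monic_char_poly[OF A] by auto
  then show ?thesis
    using poly_roots_finite eigenvalue_root_char_poly[OF A] by simp
qed

text \<open>Adjacent vertices with the same neighbours outside the pair carry the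
  eigenvector \<open>e\<^sub>i - e\<^sub>j\<close> for the eigenvalue \<open>-1\<close>.\<close>

lemma eigenvalue_adj_matrix_adjacent_twins:
  assumes "i < N" "j < N" "i \<noteq> j" "E i j" "E j i" "\<not> E i i" "\<not> E j j"
    and twins: "\<And>l. l \<noteq> i \<Longrightarrow> l \<noteq> j \<Longrightarrow> E l i \<longleftrightarrow> E l j"
  shows "eigenvalue (adj_matrix N E) (-1 :: real)"
proof -
  define v :: "real vec" where "v = unit_vec N i - unit_vec N j"
  have v: "v \<in> carrier_vec N" by (simp add: v_def)
  have "v $ i \<noteq> 0"
    using assms by (simp add: v_def)
  then have "v \<noteq> 0\<^sub>v N"
    using \<open>i < N\<close> by auto
  moreover have "adj_matrix N E *\<^sub>v v = (-1) \<cdot>\<^sub>v v"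
  proof (rule eq_vecI)
    fix l assume "l < dim_vec ((-1) \<cdot>\<^sub>v v)"
    then have "l < N" using v by simp
    have "(adj_matrix N E *\<^sub>v v) $ l = (if E l i then 1 else 0) - (if E l j then 1 else 0)"
      using assms \<open>l < N\<close> by (simp add: v_def adj_matrix_mult_vec_nth sum_subtractf sum.If_cases)
    also have "\<dots> = ((-1) \<cdot>\<^sub>v v) $ l"
      using assms \<open>l < N\<close> twins[of l] by (cases "l = i \<or> l = j") (auto simp: v_def)
    finally show "(adj_matrix N E *\<^sub>v v) $ l = ((-1) \<cdot>\<^sub>v v) $ l" .
  qed (simp add: adj_matrix_def v_def)
  ultimately have "eigenvector (adj_matrix N E) v (-1)"
    using v by (simp add: eigenvector_def adj_matrix_def)
  then show ?thesis
    unfolding eigenvalue_def by blast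
qed

abbreviation pendant_friendship :: "nat \<Rightarrow> nat \<Rightarrow> nat \<Rightarrow> bool" where
  "pendant_friendship k \<equiv> add_pendant (2*k+1) (friendship_edges k) 0"

lemma pendant_friendship_vertex_cases [consumes 1, case_names centre pendant triangle_odd triangle_even]:
  fixes i k :: nat
  assumes "i < 2*k+2"
  obtains "i = 0" | "i = 2*k+1" | t where "t < k" "i = 2*t+1" | t where "t < k" "i = 2*t+2"
proof -
  have "i = 0 \<or> i = 2*k+1 \<or> (\<exists>t<k. i = 2*t+1) \<or> (\<exists>t<k. i = 2*t+2)"
    using assms by presburger
  then show ?thesis
    using that by blast
qed

lemma pendant_friendship_eigenvector_eqs:
  assumes ev: "eigenvector (adj_matrix (2*k+2) (pendant_friendship k)) v x"
  shows "x * v $ 0 = (\<Sum>j = 1..<2*k+2. v $ j)"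
    and "x * v $ (2*k+1) = v $ 0"
    and "t < k \<Longrightarrow> x * v $ (2*t+1) = v $ 0 + v $ (2*t+2)"
    and "t < k \<Longrightarrow> x * v $ (2*t+2) = v $ 0 + v $ (2*t+1)"
proof -
  note nb = eigenvector_adj_matrix_nth[OF ev]
  have "{j. j < 2*k+2 \<and> pendant_friendship k 0 j} = {1..<2*k+2}"
    by (auto simp: add_pendant_def friendship_edges_def)
  then show "x * v $ 0 = (\<Sum>j = 1..<2*k+2. v $ j)"
    using nb[of 0] by simp
  have "{j. j < 2*k+2 \<and> pendant_friendship k (2*k+1) j} = {0}"
    by (auto simp: add_pendant_def friendship_edges_def)
  then show "x * v $ (2*k+1) = v $ 0"
    using nb[of "2*k+1"] by simp
  show "x * v $ (2*t+1) = v $ 0 + v $ (2*t+2)" if "t < k"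
  proof -
    have "{j. j < 2*k+2 \<and> pendant_friendship k (2*t+1) j} = {0, 2*t+2}"
      using that by (auto simp: add_pendant_def friendship_edges_def)
    then show ?thesis
      using nb[of "2*t+1"] that by simp
  qed
  show "x * v $ (2*t+2) = v $ 0 + v $ (2*t+1)" if "t < k"
  proof -
    have "{j. j < 2*k+2 \<and> pendant_friendship k (2*t+2) j} = {0, 2*t+1}"
      using that by (auto simp: add_pendant_def friendship_edges_def)
    then show ?thesis
      using nb[of "2*t+2"] that by simp
  qed
qed

lemma sum_in_consecutive_pairs:
  fixes f :: "nat \<Rightarrow> 'a :: comm_monoid_add"
  shows "(\<Sum>j = 1..<2*m+1. f j) = (\<Sum>t<m. f (2*t+1) + f (2*t+2))"
proof (induction m)
  case (Suc m)
  have "{1..<2*Suc m+1} = insert (2*m+2) (insert (2*m+1) {1..<2*m+1})"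
    by auto
  then show ?case
    using Suc by (simp add: ac_simps)
qed simp

lemma pendant_friendship_eigenvector_centre_nonzero:
  fixes x :: real
  assumes ev: "eigenvector (adj_matrix (2*k+2) (pendant_friendship k)) v x" and "x > 1"
  shows "v $ 0 \<noteq> 0"
proof
  assume v0: "v $ 0 = 0"
  have triangle_zero: "v $ (2*t+1) = 0 \<and> v $ (2*t+2) = 0" if "t < k" for t
  proof -
    have odd_entry: "x * v $ (2*t+1) = v $ (2*t+2)" and "x * v $ (2*t+2) = v $ (2*t+1)"
      using pendant_friendship_eigenvector_eqs(3,4)[OF ev that] v0 by simp_all
    then have "(x^2 - 1) * v $ (2*t+1) = 0"
      by (simp add: power2_eq_square algebra_simps)
    moreover have "x^2 \<noteq> 1"
      using one_less_power[OF \<open>x > 1\<close>, of 2] by simp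
    ultimately have "v $ (2*t+1) = 0"
      by simp
    with odd_entry show ?thesis
      by simp
  qed
  have "v $ i = 0" if "i < 2*k+2" for i
    using that
  proof (cases rule: pendant_friendship_vertex_cases)
    case pendant
    then show ?thesis
      using pendant_friendship_eigenvector_eqs(2)[OF ev] v0 \<open>x > 1\<close> by simp
  qed (use v0 triangle_zero in auto)
  moreover have "v \<in> carrier_vec (2*k+2)" "v \<noteq> 0\<^sub>v (2*k+2)"
    using ev by (auto simp: eigenvector_def adj_matrix_def)
  ultimately show False
    by (metis carrier_vecD eq_vecI index_zero_vec)
qed

lemma pendant_friendship_eigenvalue_cubic:
  fixes x :: real
  assumes "eigenvalue (adj_matrix (2*k+2) (pendant_friendship k)) x" and "x > 1"
  shows "x^3 - x^2 - (2 * real k + 1) * x + 1 = 0"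
proof -
  obtain v where ev: "eigenvector (adj_matrix (2*k+2) (pendant_friendship k)) v x"
    using assms(1) unfolding eigenvalue_def by blast
  note eqs = pendant_friendship_eigenvector_eqs[OF ev]
  define S where "S = (\<Sum>t<k. v $ (2*t+1) + v $ (2*t+2))"
  have "(\<Sum>j = 1..<2*k+2. v $ j) = S + v $ (2*k+1)"
    unfolding S_def sum_in_consecutive_pairs[symmetric] by (simp add: sum.atLeastLessThan_Suc)
  then have centre: "x * v $ 0 = S + v $ (2*k+1)"
    using eqs(1) by simp
  have "(x - 1) * S = (\<Sum>t<k. 2 * v $ 0)"
    unfolding S_def sum_distrib_left
    by (rule sum.cong) (use eqs(3,4) in \<open>auto simp: algebra_simps\<close>)
  then have triangles: "(x - 1) * S = 2 * k * v $ 0"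
    by simp
  have "x * (x - 1) * (x * v $ 0) = x * ((x - 1) * S) + (x - 1) * (x * v $ (2*k+1))"
    using centre by (simp add: algebra_simps)
  also have "\<dots> = x * (2 * k * v $ 0) + (x - 1) * v $ 0"
    using triangles eqs(2) by simp
  finally have "(x^3 - x^2 - (2 * real k + 1) * x + 1) * v $ 0 = 0"
    by (simp add: algebra_simps power3_eq_cube power2_eq_square)
  then show ?thesis
    using pendant_friendship_eigenvector_centre_nonzero[OF ev \<open>x > 1\<close>] by (metis mult_eq_0_iff)
qed

lemma pendant_friendship_eigenvalue_minus_one:
  assumes "k \<ge> 1"
  shows "eigenvalue (adj_matrix (2*k+2) (pendant_friendship k)) (-1 :: real)"
  using assms
  by (intro eigenvalue_adj_matrix_adjacent_twins[of 1 _ 2])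
    (auto simp: add_pendant_def friendship_edges_def)

lemma cubic_pos_beyond_twice_sqrt:
  fixes x c :: real
  assumes "c \<ge> 2" and "x \<ge> 2 * sqrt c"
  shows "x^3 - x^2 - (2*c + 1) * x + 1 > 0"
proof -
  have "sqrt c \<ge> 0"
    using assms(1) by simp
  then have "x \<ge> 0"
    using assms(2) by linarith
  have "4 * c = (2 * sqrt c)^2"
    using assms(1) by (simp add: power_mult_distrib)
  also have "\<dots> \<le> x^2"
    by (rule power_mono[OF assms(2)]) (use \<open>sqrt c \<ge> 0\<close> in simp)
  finally have "x^2 \<ge> 4 * c" .
  then have "x^2 \<ge> 8" and "x^2 - 2*c - 1 \<ge> x^2/2 - 1"
    using assms(1) by linarith+
  moreover have "x \<ge> 2.8"
  proof (rule power2_le_imp_le)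
    show "2.8^2 \<le> x^2"
      using \<open>x^2 \<ge> 8\<close> by (simp add: power2_eq_square)
  qed (fact \<open>x \<ge> 0\<close>)
  ultimately have "x * (x^2 - 2*c - 1) \<ge> 2.8 * (x^2/2 - 1)"
    by (intro mult_mono) simp_all
  moreover have "x^3 = x * x^2"
    by (simp add: power3_eq_cube power2_eq_square)
  ultimately show ?thesis
    using \<open>x^2 \<ge> 8\<close> by (simp add: algebra_simps)
qed

lemma pendant_friendship_eigenvalue_less:
  fixes x :: real
  assumes "k \<ge> 2" and "eigenvalue (adj_matrix (2*k+2) (pendant_friendship k)) x"
  shows "x < 2 * sqrt k"
proof (cases "x > 1")
  case True
  have "x^3 - x^2 - (2 * real k + 1) * x + 1 = 0"
    using pendant_friendship_eigenvalue_cubic[OF assms(2) True] .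
  then show ?thesis
    using cubic_pos_beyond_twice_sqrt[of k x] assms(1) by force
next
  case False
  have "sqrt (real k) \<ge> 1"
    using assms(1) by simp
  with False show ?thesis
    by linarith
qed

theorem lemma2p5:
  fixes n k :: nat
  assumes "even n" and "n \<ge> 6" and "k = (n - 2) div 2"
  shows "graph_rho (2*k+2) (add_pendant (2*k+1) (friendship_edges k) 0)
           < sqrt (2 * real n - 4)"
proof -
  have "k \<ge> 2" and "n = 2*k+2"
    using assms by (auto elim!: evenE)
  then have "sqrt (2 * real n - 4) = 2 * sqrt k"
    by (simp add: real_sqrt_mult)
  moreover have "eigenvalue (adj_matrix (2*k+2) (pendant_friendship k)) (-1)"
    using \<open>k \<ge> 2\<close> by (intro pendant_friendship_eigenvalue_minus_one) simp
  then have "Max {x. eigenvalue (adj_matrix (2*k+2) (pendant_friendship k)) x} < 2 * sqrt k"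
    using finite_eigenvalues_adj_matrix pendant_friendship_eigenvalue_less[OF \<open>k \<ge> 2\<close>]
    by (subst Max_less_iff) auto
  ultimately show ?thesis
    unfolding graph_rho_def by simp
qed

end
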